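(* Let $Q_0$ be a Boolean conjunctive query without self-joins whose atoms have the form $R(u,v)$ with first attribute as key, and let $Q=Q_0,R^c(\underline{u},v)$, where $R^c$ is a relation of consistent type not occurring in $Q_0$ and $u\neq v$ are variables of $Q_0$ (so $R^c(\underline u,v)$ is a chord of $Q_0$). Let $I$ be an instance for $Q$. If $\mathcal M_{Q_0}(I)$ is representable with compression $A_{Q_0}(I)$, then $\mathcal M_Q(I)$ is also representable, and a compression of it is $A_Q(I)=\{A\in A_{Q_0}(I): \forall t\in A,\ (t[u],t[v])\in (R^c)^I\}$.
   Context: Repairs: maximal subsets of $I$ satisfying all key constraints (relations of consistent type already satisfy theirs). For a query $Q'$, $Q'^f(r)$ is the set of satisfying valuations of the variables of $Q'$ in $r$; $t[x]$ denotes the value of variable $x$ in valuation $t$. A repair $r$ of $I$ is frugal for $Q'$ if no repair $r'$ has $Q'^f(r')\subsetneq Q'^f(r)$, and $\mathcal M_{Q'}(I)=\{Q'^f(r): r$ frugal repair of $I$ for $Q'\}$ (for $Q_0$ the relation $R^c$ is ignored). For a family $\mathcal S_0=\{A_1,\dots,A_m\}$ of nonempty sets of tuples, $\alpha(\mathcal S_0)=\{\{t_1,\dots,t_m\}: t_i\in A_i\}$; a collection $\mathcal S$ is representable if $\mathcal S=\alpha(\mathcal S_0)$ for such a family whose distinct members share no constant in any coordinate; $\mathcal S_0$ is then a compression of $\mathcal S$. *)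

theory Defs
  imports Main
begin

(* Atoms R(x,y): relation name, first (key) variable, second variable. A query is a set of atoms. *)
type_synonym ('r,'v) atom = "'r \<times> 'v \<times> 'v"
type_synonym ('r,'c) inst = "'r \<Rightarrow> ('c \<times> 'c) set"
(* Valuations of the query variables: partial maps whose domain is exactly the query variables. *)
type_synonym ('v,'c) valuation = "'v \<rightharpoonup> 'c"

definition qvars :: "('r,'v) atom set \<Rightarrow> 'v set" where
  "qvars Q = (\<Union>(R,x,y)\<in>Q. {x, y})"

definition self_join_free :: "('r,'v) atom set \<Rightarrow> bool" where
  "self_join_free Q \<longleftrightarrow> (\<forall>a\<in>Q. \<forall>b\<in>Q. fst a = fst b \<longrightarrow> a = b)"

definition key_consistent :: "('c \<times> 'c) set \<Rightarrow> bool" where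
  "key_consistent S \<longleftrightarrow> (\<forall>a b c. (a,b) \<in> S \<longrightarrow> (a,c) \<in> S \<longrightarrow> b = c)"

definition sub_inst :: "('r,'c) inst \<Rightarrow> ('r,'c) inst \<Rightarrow> bool" where
  "sub_inst r I \<longleftrightarrow> (\<forall>R. r R \<subseteq> I R)"

definition consistent_sub :: "('r,'c) inst \<Rightarrow> ('r,'c) inst \<Rightarrow> bool" where
  "consistent_sub r I \<longleftrightarrow> sub_inst r I \<and> (\<forall>R. key_consistent (r R))"

definition is_repair :: "('r,'c) inst \<Rightarrow> ('r,'c) inst \<Rightarrow> bool" where
  "is_repair I r \<longleftrightarrow> consistent_sub r I \<and>
     (\<forall>r'. consistent_sub r' I \<and> sub_inst r r' \<longrightarrow> r' = r)"

definition qsol :: "('r,'v) atom set \<Rightarrow> ('r,'c) inst \<Rightarrow> ('v,'c) valuation set" where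
  "qsol Q r = {t. dom t = qvars Q \<and>
       (\<forall>(R,x,y)\<in>Q. \<exists>a b. t x = Some a \<and> t y = Some b \<and> (a,b) \<in> r R)}"

definition frugal :: "('r,'v) atom set \<Rightarrow> ('r,'c) inst \<Rightarrow> ('r,'c) inst \<Rightarrow> bool" where
  "frugal Q I r \<longleftrightarrow> is_repair I r \<and> \<not> (\<exists>r'. is_repair I r' \<and> qsol Q r' \<subset> qsol Q r)"

definition Mset :: "('r,'v) atom set \<Rightarrow> ('r,'c) inst \<Rightarrow> ('v,'c) valuation set set" where
  "Mset Q I = {qsol Q r | r. frugal Q I r}"

definition alpha :: "'a set set \<Rightarrow> 'a set set" where
  "alpha S0 = {T. \<exists>f. (\<forall>A\<in>S0. f A \<in> A) \<and> T = f ` S0}"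

definition compression :: "('v,'c) valuation set set \<Rightarrow> ('v,'c) valuation set set \<Rightarrow> bool" where
  "compression S S0 \<longleftrightarrow> finite S0 \<and> (\<forall>A\<in>S0. A \<noteq> {}) \<and>
     (\<forall>A\<in>S0. \<forall>B\<in>S0. A \<noteq> B \<longrightarrow>
        (\<forall>t\<in>A. \<forall>t'\<in>B. \<forall>x. t x \<noteq> None \<longrightarrow> t x \<noteq> t' x)) \<and>
     S = alpha S0"

definition representable :: "('v,'c) valuation set set \<Rightarrow> bool" where
  "representable S \<longleftrightarrow> (\<exists>S0. compression S S0)"

end

theory Submission
  imports Defs
begin

text \<open>Since \<open>R\<^sup>c\<close> is consistent, every repair keeps all of it, so on repairs the solutions of \<open>Q\<close>
  are exactly the solutions of \<open>Q\<^sub>0\<close> that pass the filter \<open>P t = ((t u, t v) \<in> R\<^sup>c)\<close>. The frugal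
  solution sets are the minimal members of the family of solution sets, so the theorem reduces
  to a statement about finite set families: if the minimal members of \<open>\<F>\<close> are the transversals
  of a pairwise disjoint family \<open>A\<close>, then the minimal members of the filtered family are the
  transversals of those \<open>B \<in> A\<close> lying entirely inside \<open>P\<close>. A transversal of \<open>A\<close> is turned into one
  whose filter is a given transversal of these \<open>B\<close> by picking a non-\<open>P\<close> element in every other
  member, and disjointness makes transversals pairwise incomparable.\<close>

definition minimal_sets :: "'a set set \<Rightarrow> 'a set set" where
  "minimal_sets \<F> = {S \<in> \<F>. \<forall>S'\<in>\<F>. \<not> S' \<subset> S}"

lemma minimal_sets_subset: "minimal_sets \<F> \<subseteq> \<F>"
  by (auto simp: minimal_sets_def)

lemma minimal_sets_below:
  assumes "finite \<F>" "S \<in> \<F>"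
  shows "\<exists>T\<in>minimal_sets \<F>. T \<subseteq> S"
proof -
  obtain T where "T \<in> \<F>" "T \<subseteq> S" "\<forall>S'\<in>\<F>. S' \<subseteq> T \<longrightarrow> T = S'"
    using finite_has_minimal2[OF assms] by blast
  then show ?thesis by (auto simp: minimal_sets_def)
qed

lemma Union_alpha:
  assumes "\<forall>A\<in>\<A>. A \<noteq> {}"
  shows "\<Union> (alpha \<A>) = \<Union> \<A>"
proof
  show "\<Union> (alpha \<A>) \<subseteq> \<Union> \<A>" by (auto simp: alpha_def)
next
  show "\<Union> \<A> \<subseteq> \<Union> (alpha \<A>)"
  proof
    fix t assume "t \<in> \<Union> \<A>"
    then obtain A where A: "A \<in> \<A>" "t \<in> A" by blast
    define f where "f = (\<lambda>B. if B = A then t else SOME s. s \<in> B)"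
    have "\<forall>B\<in>\<A>. f B \<in> B" using assms A by (auto simp: f_def some_in_eq)
    then have "f ` \<A> \<in> alpha \<A>" by (auto simp: alpha_def)
    moreover have "t \<in> f ` \<A>" using A by (auto simp: f_def intro: rev_image_eqI)
    ultimately show "t \<in> \<Union> (alpha \<A>)" by blast
  qed
qed

lemma alpha_antichain:
  assumes "pairwise disjnt \<A>" "T \<in> alpha \<A>" "T' \<in> alpha \<A>" "T \<subseteq> T'"
  shows "T = T'"
proof -
  obtain f g where f: "\<forall>A\<in>\<A>. f A \<in> A" "T = f ` \<A>" and g: "\<forall>A\<in>\<A>. g A \<in> A" "T' = g ` \<A>"
    using assms(2,3) by (auto simp: alpha_def)
  have "f A = g A" if A: "A \<in> \<A>" for A
  proof -
    obtain B where B: "B \<in> \<A>" "f A = g B" using A f assms(4) g(2) by blast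
    have "f A \<in> A" "f A \<in> B" using A B f(1) g(1) by auto
    then have "\<not> disjnt A B" by (auto simp: disjnt_def)
    then have "B = A" using assms(1) A B(1) by (auto simp: pairwise_def)
    with B(2) show ?thesis by simp
  qed
  then show ?thesis using f(2) g(2) by simp
qed

lemma alpha_restrict_subset_filter:
  "alpha {A\<in>\<A>. A \<subseteq> Collect P} \<subseteq> (\<lambda>S. {t\<in>S. P t}) ` alpha \<A>"
proof
  fix T assume "T \<in> alpha {A\<in>\<A>. A \<subseteq> Collect P}"
  then obtain f where f: "\<forall>A\<in>\<A>. A \<subseteq> Collect P \<longrightarrow> f A \<in> A" "T = f ` {A\<in>\<A>. A \<subseteq> Collect P}"
    by (auto simp: alpha_def)
  define g where "g = (\<lambda>A. if A \<subseteq> Collect P then f A else SOME t. t \<in> A \<and> \<not> P t)"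
  have "g A \<in> A \<and> \<not> P (g A)" if "A \<in> \<A>" "\<not> A \<subseteq> Collect P" for A
    using that someI_ex[of "\<lambda>t. t \<in> A \<and> \<not> P t"] by (auto simp: g_def)
  then have "\<forall>A\<in>\<A>. g A \<in> A" and "{t\<in>g ` \<A>. P t} = T"
    using f by (auto simp: g_def)
  then show "T \<in> (\<lambda>S. {t\<in>S. P t}) ` alpha \<A>" by (auto simp: alpha_def)
qed

lemma alpha_restrict_below_filter:
  assumes "T \<in> alpha \<A>"
  shows "\<exists>T'\<in>alpha {A\<in>\<A>. A \<subseteq> Collect P}. T' \<subseteq> {t\<in>T. P t}"
proof -
  obtain f where f: "\<forall>A\<in>\<A>. f A \<in> A" "T = f ` \<A>" using assms by (auto simp: alpha_def)
  then have "f ` {A\<in>\<A>. A \<subseteq> Collect P} \<in> alpha {A\<in>\<A>. A \<subseteq> Collect P}"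
    by (auto simp: alpha_def)
  moreover have "f ` {A\<in>\<A>. A \<subseteq> Collect P} \<subseteq> {t\<in>T. P t}" using f by auto
  ultimately show ?thesis by blast
qed

theorem minimal_sets_filter_alpha:
  assumes "finite \<F>" "minimal_sets \<F> = alpha \<A>" "pairwise disjnt \<A>"
  shows "minimal_sets ((\<lambda>S. {t\<in>S. P t}) ` \<F>) = alpha {A\<in>\<A>. A \<subseteq> Collect P}"
    (is "_ = alpha ?\<A>P")
proof -
  have below: "\<exists>T'\<in>alpha ?\<A>P. T' \<subseteq> {t\<in>S. P t}" if S: "S \<in> \<F>" for S
  proof -
    obtain T where "T \<in> alpha \<A>" "T \<subseteq> S" using minimal_sets_below[OF assms(1) S] assms(2) by blast
    then show ?thesis using alpha_restrict_below_filter[of T \<A> P] by auto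
  qed
  have filtered: "alpha ?\<A>P \<subseteq> (\<lambda>S. {t\<in>S. P t}) ` \<F>"
    using alpha_restrict_subset_filter[of \<A> P] minimal_sets_subset[of \<F>] assms(2) by blast
  have antichain: "pairwise disjnt ?\<A>P" using assms(3) by (rule pairwise_subset) blast
  show ?thesis
  proof (intro set_eqI iffI)
    fix T assume "T \<in> minimal_sets ((\<lambda>S. {t\<in>S. P t}) ` \<F>)"
    then obtain S where S: "S \<in> \<F>" "T = {t\<in>S. P t}" and min: "\<forall>S'\<in>(\<lambda>S. {t\<in>S. P t}) ` \<F>. \<not> S' \<subset> T"
      by (auto simp: minimal_sets_def)
    obtain T' where T': "T' \<in> alpha ?\<A>P" "T' \<subseteq> T" using below[OF S(1)] S(2) by blast
    then have "T' \<in> (\<lambda>S. {t\<in>S. P t}) ` \<F>" using filtered by blast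
    then have "T' = T" using min T'(2) by blast
    with T'(1) show "T \<in> alpha ?\<A>P" by simp
  next
    fix T assume T: "T \<in> alpha ?\<A>P"
    have "\<not> S' \<subset> T" if S': "S' \<in> (\<lambda>S. {t\<in>S. P t}) ` \<F>" for S'
    proof
      assume "S' \<subset> T"
      moreover obtain T' where "T' \<in> alpha ?\<A>P" "T' \<subseteq> S'" using below S' by blast
      ultimately show False using alpha_antichain[OF antichain, of T' T] T by blast
    qed
    then show "T \<in> minimal_sets ((\<lambda>S. {t\<in>S. P t}) ` \<F>)"
      using T filtered by (auto simp: minimal_sets_def)
  qed
qed

lemma compression_pairwise_disjnt:
  assumes "compression S \<A>" "\<forall>T\<in>S. \<forall>t\<in>T. t x \<noteq> None"
  shows "pairwise disjnt \<A>"
proof (rule pairwiseI)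
  fix A B assume AB: "A \<in> \<A>" "B \<in> \<A>" "A \<noteq> B"
  have S: "S = alpha \<A>" and ne: "\<forall>A\<in>\<A>. A \<noteq> {}"
    and sep: "\<forall>A\<in>\<A>. \<forall>B\<in>\<A>. A \<noteq> B \<longrightarrow> (\<forall>t\<in>A. \<forall>t'\<in>B. \<forall>x. t x \<noteq> None \<longrightarrow> t x \<noteq> t' x)"
    using assms(1) by (simp_all add: compression_def)
  show "disjnt A B"
    unfolding disjnt_iff
  proof (intro allI notI)
    fix t assume t: "t \<in> A \<and> t \<in> B"
    have "\<Union> S = \<Union> \<A>" using S Union_alpha[OF ne] by simp
    then have "t x \<noteq> None" using assms(2) AB(1) t by blast
    moreover have "t x \<noteq> None \<longrightarrow> t x \<noteq> t x" using sep AB t by blast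
    ultimately show False by simp
  qed
qed

lemma compression_alpha_subset:
  assumes "compression S \<A>" "\<A>' \<subseteq> \<A>"
  shows "compression (alpha \<A>') \<A>'"
  unfolding compression_def
proof (intro conjI ballI impI allI refl)
  show "finite \<A>'" using assms finite_subset by (auto simp: compression_def)
  show "A \<noteq> {}" if "A \<in> \<A>'" for A using assms that by (auto simp: compression_def)
  fix A B t t' x
  assume "A \<in> \<A>'" "B \<in> \<A>'" "A \<noteq> B" "t \<in> A" "t' \<in> B" "t x \<noteq> None"
  then show "t x \<noteq> t' x" using assms unfolding compression_def by (meson subsetD)
qed

lemma repair_keeps_consistent_relation:
  assumes "is_repair I r" "key_consistent (I R)"
  shows "r R = I R"
proof -
  have r: "consistent_sub r I" using assms(1) by (simp add: is_repair_def)
  then have "consistent_sub (r(R := I R)) I" "sub_inst r (r(R := I R))"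
    using assms(2) by (auto simp: consistent_sub_def sub_inst_def)
  then have "r(R := I R) = r" using assms(1) by (simp add: is_repair_def)
  then show ?thesis by (metis fun_upd_same)
qed

lemma qvars_insert: "qvars (insert (R,x,y) Q) = {x,y} \<union> qvars Q"
  by (auto simp: qvars_def)

lemma qsol_insert_atom:
  assumes "u \<in> qvars Q" "v \<in> qvars Q"
  shows "qsol (insert (R,u,v) Q) r = {t\<in>qsol Q r. (the (t u), the (t v)) \<in> r R}"
proof -
  have qv: "qvars (insert (R,u,v) Q) = qvars Q" using assms by (auto simp: qvars_insert)
  show ?thesis
  proof (intro set_eqI iffI)
    fix t assume "t \<in> qsol (insert (R,u,v) Q) r"
    then show "t \<in> {t\<in>qsol Q r. (the (t u), the (t v)) \<in> r R}"
      using qv by (auto simp: qsol_def)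
  next
    fix t assume t: "t \<in> {t\<in>qsol Q r. (the (t u), the (t v)) \<in> r R}"
    then have "dom t = qvars Q" by (simp add: qsol_def)
    then obtain a b where "t u = Some a" "t v = Some b" using assms by blast
    then show "t \<in> qsol (insert (R,u,v) Q) r" using t qv by (auto simp: qsol_def)
  qed
qed

lemma qsol_mono: "sub_inst r I \<Longrightarrow> qsol Q r \<subseteq> qsol Q I"
  by (fastforce simp: qsol_def sub_inst_def)

lemma finite_qsol:
  assumes "finite Q" "\<forall>R. finite (I R)"
  shows "finite (qsol Q I)"
proof -
  let ?C = "\<Union>(R,x,y)\<in>Q. fst ` I R \<union> snd ` I R"
  have fin_vars: "finite (qvars Q)" using assms(1) by (auto simp: qvars_def)
  have fin_consts: "finite ?C" using assms by auto
  have "ran t \<subseteq> ?C" if t: "t \<in> qsol Q I" for t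
  proof
    fix z assume "z \<in> ran t"
    then obtain x where tx: "t x = Some z" by (auto simp: ran_def)
    then have "x \<in> qvars Q" using t by (auto simp: qsol_def)
    then obtain R x1 y1 where at: "(R,x1,y1) \<in> Q" "x = x1 \<or> x = y1" by (auto simp: qvars_def)
    then obtain a b where "t x1 = Some a" "t y1 = Some b" "(a,b) \<in> I R"
      using t unfolding qsol_def by fastforce
    then have "z \<in> fst ` I R \<union> snd ` I R" using at(2) tx by (auto intro: rev_image_eqI)
    then show "z \<in> ?C" using at(1) by blast
  qed
  then have "qsol Q I \<subseteq> {m. dom m = qvars Q \<and> ran m \<subseteq> ?C}" by (auto simp: qsol_def)
  then show ?thesis using finite_set_of_finite_maps[OF fin_vars fin_consts] finite_subset by blast
qed

lemma finite_repair_solutions: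
  assumes "finite Q" "\<forall>R. finite (I R)"
  shows "finite {qsol Q r | r. is_repair I r}"
proof -
  have "{qsol Q r | r. is_repair I r} \<subseteq> Pow (qsol Q I)"
    using qsol_mono by (fastforce simp: is_repair_def consistent_sub_def)
  then show ?thesis using finite_qsol[OF assms] finite_subset by blast
qed

lemma Mset_eq_minimal_sets: "Mset Q I = minimal_sets {qsol Q r | r. is_repair I r}"
  by (auto simp: Mset_def minimal_sets_def frugal_def)

theorem lemma4p7:
  fixes Q0 :: "('r,'v) atom set" and Rc :: 'r and u v :: 'v
    and I :: "('r,'c) inst" and A0 :: "('v,'c) valuation set set"
  assumes "finite Q0" and "self_join_free Q0"
    and "Rc \<notin> fst ` Q0"
    and "u \<in> qvars Q0" and "v \<in> qvars Q0" and "u \<noteq> v"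
    and "\<forall>R. finite (I R)"
    and "key_consistent (I Rc)"
    and "compression (Mset Q0 I) A0"
  shows "representable (Mset (insert (Rc,u,v) Q0) I)
    \<and> compression (Mset (insert (Rc,u,v) Q0) I)
        {A\<in>A0. \<forall>t\<in>A. (the (t u), the (t v)) \<in> I Rc}"
proof -
  define P where "P t \<longleftrightarrow> (the (t u), the (t v)) \<in> I Rc" for t :: "('v,'c) valuation"
  have chord: "qsol (insert (Rc,u,v) Q0) r = {t\<in>qsol Q0 r. P t}" if "is_repair I r" for r
    using qsol_insert_atom[OF assms(4,5), of Rc r] repair_keeps_consistent_relation[OF that assms(8)]
    by (simp add: P_def)
  have sols: "{qsol (insert (Rc,u,v) Q0) r | r. is_repair I r}
      = (\<lambda>S. {t\<in>S. P t}) ` {qsol Q0 r | r. is_repair I r}"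
    using chord by (auto simp: image_iff)
  have "\<forall>T\<in>Mset Q0 I. \<forall>t\<in>T. t u \<noteq> None"
    using assms(4) by (auto simp: Mset_def qsol_def)
  then have disjoint: "pairwise disjnt A0" by (rule compression_pairwise_disjnt[OF assms(9)])
  have minimal: "minimal_sets {qsol Q0 r | r. is_repair I r} = alpha A0"
    using assms(9) by (simp add: compression_def Mset_eq_minimal_sets)
  have "Mset (insert (Rc,u,v) Q0) I = alpha {A\<in>A0. A \<subseteq> Collect P}"
    unfolding Mset_eq_minimal_sets sols
    by (rule minimal_sets_filter_alpha[OF finite_repair_solutions[OF assms(1,7)] minimal disjoint])
  moreover have "compression (alpha {A\<in>A0. A \<subseteq> Collect P}) {A\<in>A0. A \<subseteq> Collect P}"
    by (rule compression_alpha_subset[OF assms(9)]) blast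
  moreover have "{A\<in>A0. A \<subseteq> Collect P} = {A\<in>A0. \<forall>t\<in>A. (the (t u), the (t v)) \<in> I Rc}"
    by (auto simp: P_def)
  ultimately have "compression (Mset (insert (Rc,u,v) Q0) I)
      {A\<in>A0. \<forall>t\<in>A. (the (t u), the (t v)) \<in> I Rc}" by simp
  then show ?thesis unfolding representable_def by blast
qed

end
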